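(* Let $d>2$, $\beta>0$, $\lambda>0$, $\mu\in\mathbb R$, and let $r_\kappa$ be as defined in the context. Then: (a) $r_\kappa$ converges as $\kappa\to\infty$ to some $r_*\in(0,1)$ if and only if $\beta^d\mu<\zeta(d)\lambda$; in that case $r_*$ is the unique solution of $$\frac{\mu}{\lambda}=\frac{\log r_*}{\beta\lambda}+\frac{1}{\beta^d}\int_{[0,\infty)^d}\frac{r_*\,dp}{e^{|p|_1}-r_*}.$$ (b) $\kappa^d(1-r_\kappa)\to\beta^d\lambda/(\beta^d\mu-\zeta(d)\lambda)$ (and hence $r_\kappa\to1$) if and only if $\beta^d\mu>\zeta(d)\lambda$. (c) $r_\kappa\to1$ and $\kappa^d(1-r_\kappa)\to+\infty$ if and only if $\beta^d\mu=\zeta(d)\lambda$.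
   Context: $h_\kappa=\frac12\sum_{j=1}^d\big(-\partial^2/\partial x_j^2+x_j^2/\kappa^2-1/\kappa\big)$ on $L^2(\mathbb R^d)$ (spectrum $\{|s|_1/\kappa: s\in\mathbb Z_+^d\}$, $|s|_1=\sum_js_j$), $G_\kappa(\beta)=e^{-\beta h_\kappa}$. For $\kappa\ge1$, $(r_\kappa,s_\kappa)$ is the unique solution with $r_\kappa\in(0,1)$ of the system $r=\exp(\beta\mu-\beta\lambda s/\kappa^d)$, $s=\mathrm{Tr}[rG_\kappa(\beta)(1-rG_\kappa(\beta))^{-1}]$; equivalently $\kappa^{-d}\mathrm{Tr}[r_\kappa G_\kappa(\beta)(1-r_\kappa G_\kappa(\beta))^{-1}]=(\beta\mu-\log r_\kappa)/(\beta\lambda)$. $\zeta$ is the Riemann zeta function; $|p|_1=\sum_jp_j$. *)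

theory Defs
  imports "HOL-Analysis.Analysis"
begin

definition zeta_nat :: "nat \<Rightarrow> real" where
  "zeta_nat d = (\<Sum>n. 1 / real (Suc n) ^ d)"

text \<open>Multi-indices s in Z_+^d, represented as extensional functions on {..<d}.\<close>
definition multi_idx :: "nat \<Rightarrow> (nat \<Rightarrow> nat) set" where
  "multi_idx d = PiE {..<d} (\<lambda>_. UNIV)"

text \<open>Tr[r G_kappa(beta) (1 - r G_kappa(beta))^{-1}], written out as the sum over the
  spectrum of h_kappa: eigenvalue |s|_1/kappa of h_kappa gives eigenvalue
  exp(-beta |s|_1/kappa) of G_kappa(beta).\<close>
definition trace_rG :: "nat \<Rightarrow> real \<Rightarrow> real \<Rightarrow> real \<Rightarrow> real" where
  "trace_rG d \<kappa> \<beta> r =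
     infsum (\<lambda>s. r * exp (- \<beta> * real (\<Sum>j<d. s j) / \<kappa>)
                   / (1 - r * exp (- \<beta> * real (\<Sum>j<d. s j) / \<kappa>))) (multi_idx d)"

definition r_kappa :: "nat \<Rightarrow> real \<Rightarrow> real \<Rightarrow> real \<Rightarrow> real \<Rightarrow> real" where
  "r_kappa d \<beta> \<mu> lam \<kappa> =
     (THE r. 0 < r \<and> r < 1 \<and>
        trace_rG d \<kappa> \<beta> r / \<kappa> ^ d = (\<beta> * \<mu> - ln r) / (\<beta> * lam))"

definition limit_integral :: "nat \<Rightarrow> real \<Rightarrow> real" where
  "limit_integral d r =
     (LINT p : {p \<in> space (PiM {..<d} (\<lambda>_. lborel)). \<forall>j<d. 0 \<le> p j}
        | PiM {..<d} (\<lambda>_. lborel). r / (exp (\<Sum>j<d. p j) - r))"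

end

theory Submission
  imports Defs "HOL-Real_Asymp.Real_Asymp"
begin

(* Write t = beta/kappa and q = exp(-t).  Expanding the Bose factor in geometric
   series and summing the product of geometric series over Z_+^d gives
     kappa^-d Tr[r G (1 - r G)^-1] = sum_{n>=1} r^n / (kappa (1 - q^n))^d,
   and writing (x/(1 - e^-x))^d = x^d + (bounded excess) splits this as
     E(t, r)/beta^d + r/((1 - r) kappa^d),
   where the excess series E(t, r) is dominated termwise by C/n^d and hence tends
   to the polylogarithm Li_d(r) as t -> 0 (Tannery's theorem). *)

definition bose_factor :: "real \<Rightarrow> real" where
  "bose_factor x = x / (1 - exp (-x))"

definition bose_excess :: "nat \<Rightarrow> real \<Rightarrow> real" where
  "bose_excess d x = bose_factor x ^ d - x ^ d"

lemma power_diff_le_mean_value: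
  fixes a b :: real
  assumes "0 \<le> b" "b \<le> a"
  shows "a ^ n - b ^ n \<le> real n * a ^ (n - 1) * (a - b)"
proof (induction n)
  case 0
  then show ?case by simp
next
  case (Suc n)
  have "a ^ Suc n - b ^ Suc n = a * (a ^ n - b ^ n) + b ^ n * (a - b)"
    by (simp add: algebra_simps)
  also have "\<dots> \<le> a * (real n * a ^ (n - 1) * (a - b)) + a ^ n * (a - b)"
    using Suc assms by (intro add_mono mult_left_mono mult_right_mono power_mono) auto
  also have "\<dots> = real (Suc n) * a ^ n * (a - b)"
    by (cases n) (simp_all add: algebra_simps)
  finally show ?case by simp
qed

lemma bose_factor_bounds:
  assumes "x > 0"
  shows "x \<le> bose_factor x" "bose_factor x - x \<le> (1 + x) * exp (-x)" "bose_factor x \<le> 1 + x"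
proof -
  have pos: "0 < 1 - exp (-x)" using assms by simp
  have small: "(1 + x) * exp (-x) \<le> 1"
  proof -
    have "(1 + x) * exp (-x) \<le> exp x * exp (-x)"
      by (intro mult_right_mono exp_ge_add_one_self) simp
    then show ?thesis by (simp flip: exp_add)
  qed
  have "x * (1 - exp (-x)) \<le> x" using assms by (simp add: mult_left_le)
  then show "x \<le> bose_factor x" unfolding bose_factor_def using pos by (simp add: le_divide_eq)
  have "(1 + x) * exp (-x) * exp (-x) \<le> exp (-x)"
    using small assms by (intro mult_left_le_one_le) auto
  moreover have "(x + (1 + x) * exp (-x)) * (1 - exp (-x))
      = x + exp (-x) - (1 + x) * exp (-x) * exp (-x)"
    by (simp add: algebra_simps)
  ultimately have "x \<le> (x + (1 + x) * exp (-x)) * (1 - exp (-x))" by linarith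
  then have "bose_factor x \<le> x + (1 + x) * exp (-x)"
    unfolding bose_factor_def using pos by (simp add: divide_le_eq)
  then show "bose_factor x - x \<le> (1 + x) * exp (-x)" "bose_factor x \<le> 1 + x"
    using small by linarith+
qed

lemma bose_excess_nonneg: "x > 0 \<Longrightarrow> 0 \<le> bose_excess d x"
  unfolding bose_excess_def using bose_factor_bounds(1)[of x] by (simp add: power_mono)

text \<open>The uniform bound bose_excess d x \<le> d^{d+1}, from the mean value bound and
  (1 + x)^d \<le> d^d e^x.\<close>
lemma bose_excess_le:
  assumes "x > 0" "d > 0"
  shows "bose_excess d x \<le> real d * real d ^ d"
proof -
  note bounds = bose_factor_bounds[OF assms(1)]
  have "bose_excess d x \<le> real d * bose_factor x ^ (d - 1) * (bose_factor x - x)"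
    unfolding bose_excess_def by (rule power_diff_le_mean_value) (use assms bounds in auto)
  also have "\<dots> \<le> real d * (1 + x) ^ (d - 1) * ((1 + x) * exp (-x))"
    using assms bounds by (intro mult_mono mult_left_mono power_mono) auto
  also have "\<dots> = real d * ((1 + x) ^ d * exp (-x))"
    using assms by (cases d) auto
  also have "\<dots> \<le> real d * real d ^ d"
  proof -
    have "((1 + x) / real d) ^ d \<le> (1 + x / real d) ^ d"
      using assms by (intro power_mono) (auto simp: divide_simps)
    also have "\<dots> \<le> exp x"
      by (rule exp_ge_one_plus_x_over_n_power_n) (use assms in auto)
    finally have "(1 + x) ^ d \<le> real d ^ d * exp x"
      using assms by (simp add: power_divide divide_le_eq mult.commute)
    then have "(1 + x) ^ d * exp (-x) \<le> real d ^ d"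
      by (simp add: exp_minus field_simps)
    then show ?thesis by (intro mult_left_mono) auto
  qed
  finally show ?thesis .
qed

lemma bose_excess_tendsto: "d > 0 \<Longrightarrow> (bose_excess d \<longlongrightarrow> 1) (at_right 0)"
proof -
  assume "d > 0"
  have "(bose_factor \<longlongrightarrow> 1) (at_right 0)"
    unfolding bose_factor_def by real_asymp
  then have "((\<lambda>x. bose_factor x ^ d - x ^ d) \<longlongrightarrow> 1 ^ d - 0 ^ d) (at_right 0)"
    by (intro tendsto_intros tendsto_ident_at)
  then show ?thesis using \<open>d > 0\<close> unfolding bose_excess_def[abs_def] by (simp add: power_0_left)
qed

lemma tendsto_suminf_dominated:
  fixes a :: "nat \<Rightarrow> 'x \<Rightarrow> real"
  assumes lim: "\<And>n. ((\<lambda>x. a n x) \<longlongrightarrow> b n) F"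
    and bound: "eventually (\<lambda>x. \<forall>n. \<bar>a n x\<bar> \<le> M n) F" and M: "summable M"
  shows "((\<lambda>x. \<Sum>n. a n x) \<longlongrightarrow> (\<Sum>n. b n)) F"
proof (cases "F = bot")
  case False
  have "eventually (\<lambda>(k::nat, x). \<forall>n. \<bar>a n x\<bar> \<le> M n) (at_top \<times>\<^sub>F F)"
    using bound by (subst eventually_prod2) (auto simp: sequentially_bot)
  then have "eventually (\<lambda>(k::nat, x). norm (a k x) \<le> M k) (at_top \<times>\<^sub>F F)"
    by (rule eventually_mono) auto
  with tannerys_theorem[of a b F M] lim M False show ?thesis by blast
qed simp

lemma summable_power_series_dominated:
  fixes c :: "nat \<Rightarrow> real"
  assumes "summable (\<lambda>n. \<bar>c n\<bar>)" "\<bar>r\<bar> \<le> 1"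
  shows "summable (\<lambda>n. r ^ Suc n * c n)"
proof (rule summable_comparison_test[OF _ assms(1)])
  have "\<bar>r\<bar> ^ Suc n \<le> 1" for n using assms(2) by (intro power_le_one) auto
  then show "\<exists>N. \<forall>n\<ge>N. norm (r ^ Suc n * c n) \<le> \<bar>c n\<bar>"
    by (auto simp: abs_mult power_abs intro!: mult_left_le_one_le)
qed

lemma tendsto_power_series_dominated:
  fixes c :: "nat \<Rightarrow> real"
  assumes c: "summable (\<lambda>n. \<bar>c n\<bar>)" and r: "(rf \<longlongrightarrow> \<rho>) F"
    and r01: "eventually (\<lambda>x. 0 \<le> rf x \<and> rf x \<le> 1) F"
  shows "((\<lambda>x. \<Sum>n. rf x ^ Suc n * c n) \<longlongrightarrow> (\<Sum>n. \<rho> ^ Suc n * c n)) F"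
proof (rule tendsto_suminf_dominated[OF _ _ c])
  show "((\<lambda>x. rf x ^ Suc n * c n) \<longlongrightarrow> \<rho> ^ Suc n * c n) F" for n
    by (intro tendsto_intros r)
  have "\<bar>y ^ Suc n * c n\<bar> \<le> \<bar>c n\<bar>" if "0 \<le> y" "y \<le> 1" for y n
  proof -
    have "\<bar>y ^ Suc n * c n\<bar> = y ^ Suc n * \<bar>c n\<bar>" using that by (simp add: abs_mult)
    also have "\<dots> \<le> \<bar>c n\<bar>"
      by (rule mult_left_le_one_le) (use that in \<open>auto intro: power_le_one simp del: power_Suc\<close>)
    finally show ?thesis .
  qed
  then show "eventually (\<lambda>x. \<forall>n. \<bar>rf x ^ Suc n * c n\<bar> \<le> \<bar>c n\<bar>) F"
    using r01 by (auto elim: eventually_mono)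
qed

lemma continuous_on_power_series_dominated:
  fixes c :: "nat \<Rightarrow> real"
  assumes "summable (\<lambda>n. \<bar>c n\<bar>)"
  shows "continuous_on {0..1} (\<lambda>r. \<Sum>n. r ^ Suc n * c n)"
  unfolding continuous_on_def
proof safe
  fix x :: real
  have "eventually (\<lambda>r. r \<in> {0..1::real}) (at x within {0..1})"
    by (simp add: eventually_at_filter)
  then show "((\<lambda>r. \<Sum>n. r ^ Suc n * c n) \<longlongrightarrow> (\<Sum>n. x ^ Suc n * c n)) (at x within {0..1})"
    by (intro tendsto_power_series_dominated[OF assms tendsto_ident_at])
       (auto elim: eventually_mono)
qed

lemma power_series_mono:
  fixes c :: "nat \<Rightarrow> real"
  assumes "summable (\<lambda>n. \<bar>c n\<bar>)" "\<And>n. 0 \<le> c n" "0 \<le> r1" "r1 \<le> r2" "r2 \<le> 1"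
  shows "(\<Sum>n. r1 ^ Suc n * c n) \<le> (\<Sum>n. r2 ^ Suc n * c n)"
  using assms by (intro suminf_le summable_power_series_dominated allI mult_right_mono power_mono) auto

definition polylog :: "nat \<Rightarrow> real \<Rightarrow> real" where
  "polylog d r = (\<Sum>n. r ^ Suc n / real (Suc n) ^ d)"

lemma summable_inverse_Suc_power: "d \<ge> 2 \<Longrightarrow> summable (\<lambda>n. C / real (Suc n) ^ d)"
  using summable_mult[OF inverse_power_summable[of d, THEN summable_Suc_iff[THEN iffD2]], of C]
  by (simp add: field_simps)

lemma polylog_series: "polylog d r = (\<Sum>n. r ^ Suc n * (1 / real (Suc n) ^ d))"
  unfolding polylog_def by simp

lemma summable_polylog: "d \<ge> 2 \<Longrightarrow> \<bar>r\<bar> \<le> 1 \<Longrightarrow> summable (\<lambda>n. r ^ Suc n / real (Suc n) ^ d)"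
  using summable_power_series_dominated[of "\<lambda>n. 1 / real (Suc n) ^ d" r]
    summable_inverse_Suc_power[of d 1] by simp

lemma polylog_one: "polylog d 1 = zeta_nat d"
  unfolding polylog_def zeta_nat_def by simp

lemma polylog_tendsto:
  assumes "d \<ge> 2" "(rf \<longlongrightarrow> \<rho>) F" "eventually (\<lambda>x. 0 \<le> rf x \<and> rf x \<le> 1) F"
  shows "((\<lambda>x. polylog d (rf x)) \<longlongrightarrow> polylog d \<rho>) F"
  unfolding polylog_series
  by (rule tendsto_power_series_dominated) (use assms summable_inverse_Suc_power in auto)

lemma polylog_continuous: "d \<ge> 2 \<Longrightarrow> continuous_on {0..1} (polylog d)"
  unfolding polylog_series[abs_def]
  by (rule continuous_on_power_series_dominated) (use summable_inverse_Suc_power in auto)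

lemma polylog_mono: "d \<ge> 2 \<Longrightarrow> 0 \<le> r1 \<Longrightarrow> r1 \<le> r2 \<Longrightarrow> r2 \<le> 1 \<Longrightarrow> polylog d r1 \<le> polylog d r2"
  unfolding polylog_series
  by (rule power_series_mono) (use summable_inverse_Suc_power in auto)

lemma polylog_nonneg: "d \<ge> 2 \<Longrightarrow> 0 \<le> r \<Longrightarrow> r \<le> 1 \<Longrightarrow> 0 \<le> polylog d r"
  using polylog_mono[of d 0 r] by (simp add: polylog_def)

lemma polylog_le_zeta: "d \<ge> 2 \<Longrightarrow> 0 \<le> r \<Longrightarrow> r \<le> 1 \<Longrightarrow> polylog d r \<le> zeta_nat d"
  using polylog_mono[of d r 1] by (simp add: polylog_one)

text \<open>The excess series E(t, r) = \<Sum>_{n\<ge>1} r^n bose_excess d (n t) / n^d, the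
  regular part of the rescaled trace at spacing t = beta/kappa.\<close>
definition excess_coeff :: "nat \<Rightarrow> real \<Rightarrow> nat \<Rightarrow> real" where
  "excess_coeff d t n = bose_excess d (real (Suc n) * t) / real (Suc n) ^ d"

definition excess_series :: "nat \<Rightarrow> real \<Rightarrow> real \<Rightarrow> real" where
  "excess_series d t r = (\<Sum>n. r ^ Suc n * excess_coeff d t n)"

lemma excess_coeff_bounds:
  assumes "d > 0" "t > 0"
  shows "0 \<le> excess_coeff d t n" "excess_coeff d t n \<le> real d * real d ^ d / real (Suc n) ^ d"
  unfolding excess_coeff_def using assms
  by (auto intro!: divide_right_mono divide_nonneg_nonneg bose_excess_nonneg bose_excess_le)

lemma summable_excess_coeff:
  assumes "d \<ge> 2" "t > 0"
  shows "summable (\<lambda>n. \<bar>excess_coeff d t n\<bar>)"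
  using summable_inverse_Suc_power[OF assms(1), of "real d * real d ^ d"] excess_coeff_bounds[of d t]
    assms by (subst abs_of_nonneg) (auto intro: summable_comparison_test')

lemma excess_series_mono:
  "d \<ge> 2 \<Longrightarrow> t > 0 \<Longrightarrow> 0 \<le> r1 \<Longrightarrow> r1 \<le> r2 \<Longrightarrow> r2 \<le> 1 \<Longrightarrow> excess_series d t r1 \<le> excess_series d t r2"
  unfolding excess_series_def
  by (rule power_series_mono) (use summable_excess_coeff excess_coeff_bounds in auto)

lemma excess_series_nonneg: "d \<ge> 2 \<Longrightarrow> t > 0 \<Longrightarrow> 0 \<le> r \<Longrightarrow> r \<le> 1 \<Longrightarrow> 0 \<le> excess_series d t r"
  using excess_series_mono[of d t 0 r] by (simp add: excess_series_def)

lemma excess_series_continuous: "d \<ge> 2 \<Longrightarrow> t > 0 \<Longrightarrow> continuous_on {0..1} (excess_series d t)"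
  unfolding excess_series_def[abs_def]
  by (rule continuous_on_power_series_dominated) (use summable_excess_coeff in auto)

text \<open>As the lattice spacing t tends to 0 (and r tends to \<rho>), the excess series
  tends to the polylogarithm: each coefficient tends to 1/n^d, with the uniform
  domination d^{d+1}/n^d.\<close>
lemma excess_series_tendsto_polylog:
  assumes d: "d \<ge> 2" and t: "(tf \<longlongrightarrow> 0) F" "eventually (\<lambda>x. tf x > 0) F"
    and r: "(rf \<longlongrightarrow> \<rho>) F" "eventually (\<lambda>x. 0 \<le> rf x \<and> rf x \<le> 1) F"
  shows "((\<lambda>x. excess_series d (tf x) (rf x)) \<longlongrightarrow> polylog d \<rho>) F"
  unfolding excess_series_def polylog_series
proof (rule tendsto_suminf_dominated[OF _ _ summable_inverse_Suc_power[OF d]])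
  fix n
  have "filterlim (\<lambda>x. real (Suc n) * tf x) (at_right 0) F"
    using t by (intro tendsto_imp_filterlim_at_right)
      (auto intro: tendsto_mult_right_zero elim: eventually_mono)
  moreover have "(bose_excess d \<longlongrightarrow> 1) (at_right 0)"
    using d by (intro bose_excess_tendsto) auto
  ultimately have "((\<lambda>x. bose_excess d (real (Suc n) * tf x)) \<longlongrightarrow> 1) F"
    by (rule filterlim_compose[rotated])
  then show "((\<lambda>x. rf x ^ Suc n * excess_coeff d (tf x) n) \<longlongrightarrow> \<rho> ^ Suc n * (1 / real (Suc n) ^ d)) F"
    unfolding excess_coeff_def by (intro tendsto_intros r(1)) auto
next
  have "\<bar>y ^ Suc n * excess_coeff d s n\<bar> \<le> real d * real d ^ d / real (Suc n) ^ d"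
    if "s > 0" "0 \<le> y" "y \<le> 1" for s y n
  proof -
    have "\<bar>y ^ Suc n * excess_coeff d s n\<bar> = y ^ Suc n * excess_coeff d s n"
      using excess_coeff_bounds[of d s n] that d by simp
    also have "\<dots> \<le> excess_coeff d s n"
      using excess_coeff_bounds[of d s n] that d by (intro mult_left_le_one_le power_le_one) auto
    finally show ?thesis using excess_coeff_bounds[of d s n] that d by linarith
  qed
  then show "eventually (\<lambda>x. \<forall>n. \<bar>rf x ^ Suc n * excess_coeff d (tf x) n\<bar>
      \<le> real d * real d ^ d / real (Suc n) ^ d) F"
    using eventually_conj[OF t(2) r(2)] by (auto elim: eventually_mono)
qed

text \<open>Geometric series, as unconditional sums over \<nat> and over the multi-indices
  \<int>_+^d (the latter is the product of d geometric series).\<close>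
lemma has_sum_geometric_Suc:
  assumes "0 \<le> x" "x < (1::real)"
  shows "((\<lambda>n. x ^ Suc n) has_sum (x / (1 - x))) UNIV"
proof (rule sums_nonneg_imp_has_sum)
  have "(\<lambda>n. x * x ^ n) sums (x * (1 / (1 - x)))"
    by (rule sums_mult) (use geometric_sums[of x] assms in auto)
  then show "(\<lambda>n. x ^ Suc n) sums (x / (1 - x))" by simp
qed (use assms in auto)

lemma has_sum_geometric_multi_idx:
  assumes "0 \<le> y" "y < (1::real)"
  shows "((\<lambda>s. \<Prod>j<d. y ^ s j) has_sum ((1 / (1 - y)) ^ d)) (multi_idx d)"
proof -
  have geom: "((\<lambda>k. y ^ k) has_sum (1 / (1 - y))) UNIV"
    by (rule sums_nonneg_imp_has_sum) (use geometric_sums[of y] assms in auto)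
  then have abs: "(\<lambda>k. norm (y ^ k)) summable_on UNIV"
    using assms by (simp add: summable_on_def abs_of_nonneg) blast
  have "infsum (\<lambda>s. \<Prod>j\<in>{..<d}. y ^ s j) (PiE {..<d} (\<lambda>_. UNIV))
      = (\<Prod>j\<in>{..<d}. infsum (\<lambda>k. y ^ k) UNIV)"
    by (rule infsum_prod_PiE_abs[where f="\<lambda>_ k. y ^ k"]) (use abs in auto)
  also have "\<dots> = (1 / (1 - y)) ^ d" using infsumI[OF geom] by simp
  finally have val: "infsum (\<lambda>s. \<Prod>j<d. y ^ s j) (multi_idx d) = (1 / (1 - y)) ^ d"
    unfolding multi_idx_def .
  moreover have "(1 / (1 - y)) ^ d \<noteq> 0" using assms by simp
  ultimately have "(\<lambda>s. \<Prod>j<d. y ^ s j) summable_on (multi_idx d)"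
    using infsum_not_exists by metis
  then show ?thesis using val has_sum_infsum by metis
qed

lemma infsum_swap_nonneg_series:
  fixes h :: "nat \<Rightarrow> 'b \<Rightarrow> real"
  assumes nonneg: "\<And>n s. 0 \<le> h n s" and rows: "\<And>n. (h n has_sum g n) B" and g: "summable g"
  shows "infsum (\<lambda>s. infsum (\<lambda>n. h n s) UNIV) B = suminf g"
proof -
  have "0 \<le> g n" for n using rows[of n] by (rule has_sum_nonneg) (use nonneg in auto)
  then have g_summable: "g summable_on UNIV" using g by (intro summable_nonneg_imp_summable_on)
  have "(\<lambda>(n, s). h n s) summable_on (UNIV \<times> B)"
    using summable_on_SigmaI[where f="\<lambda>(n, s). h n s" and B="\<lambda>_. B", OF _ g_summable] rows nonneg
    by auto
  then have "infsum (\<lambda>s. infsum (\<lambda>n. h n s) UNIV) B = infsum (\<lambda>n. infsum (h n) B) UNIV"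
    by (intro infsum_swap_banach[symmetric]) simp
  also have "\<dots> = infsum g UNIV" using infsumI[OF rows] by simp
  also have "\<dots> = suminf g"
    using has_sum_imp_sums[OF has_sum_infsum[OF g_summable]] sums_unique by metis
  finally show ?thesis .
qed

text \<open>The eigenvalue r q^{|s|_1} of r G is expanded as \<Sum>_n (r q^{|s|_1})^{n+1}, and
  for fixed n the sum over s \<in> \<int>_+^d is a product of geometric series.\<close>
lemma trace_rG_series:
  assumes k: "\<kappa> > 0" and b: "\<beta> > 0" and r: "0 < r" "r < 1"
  shows "trace_rG d \<kappa> \<beta> r = (\<Sum>n. r ^ Suc n * (1 / (1 - exp (-\<beta>/\<kappa>) ^ Suc n)) ^ d)"
proof -
  define q where "q = exp (-\<beta>/\<kappa>)"
  have q: "0 < q" "q < 1" unfolding q_def using k b by auto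
  define h where "h = (\<lambda>(n::nat) (s::nat\<Rightarrow>nat). r ^ Suc n * (\<Prod>j<d. (q ^ Suc n) ^ s j))"
  define g where "g = (\<lambda>n::nat. r ^ Suc n * (1 / (1 - q ^ Suc n)) ^ d)"
  have qn: "0 \<le> q ^ Suc n" "q ^ Suc n < 1" for n
    using q power_Suc_less_one[of q n] by (auto simp del: power_Suc)
  have rows: "(h n has_sum g n) (multi_idx d)" for n
    unfolding h_def g_def using has_sum_geometric_multi_idx[OF qn[of n], of d]
    by (simp add: has_sum_cmult_right)
  have g_nonneg: "0 \<le> g n" for n unfolding g_def using q qn[of n] r by auto
  have g_le: "g n \<le> r ^ Suc n * (1 / (1 - q)) ^ d" for n
  proof -
    have "q ^ Suc n \<le> q" using power_decreasing[of 1 "Suc n" q] q by simp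
    then have "1 / (1 - q ^ Suc n) \<le> 1 / (1 - q)" using q qn[of n] by (intro divide_left_mono) auto
    then show ?thesis unfolding g_def using r qn[of n] by (intro mult_left_mono power_mono) auto
  qed
  have "summable (\<lambda>n. r ^ Suc n * (1 / (1 - q)) ^ d)"
    using r by (intro summable_mult2) (simp add: summable_geometric)
  then have "summable g"
    by (rule summable_comparison_test[rotated]) (use g_le g_nonneg in auto)
  moreover have "0 \<le> h n s" for n s
    unfolding h_def using r q by (intro mult_nonneg_nonneg prod_nonneg zero_le_power) auto
  ultimately have swap: "infsum (\<lambda>s. infsum (\<lambda>n. h n s) UNIV) (multi_idx d) = suminf g"
    using rows by (intro infsum_swap_nonneg_series)
  have column: "infsum (\<lambda>n. h n s) UNIV
      = r * exp (- \<beta> * real (\<Sum>j<d. s j) / \<kappa>) / (1 - r * exp (- \<beta> * real (\<Sum>j<d. s j) / \<kappa>))" for s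
  proof -
    define m where "m = (\<Sum>j<d. s j)"
    have e: "exp (- \<beta> * real m / \<kappa>) = q ^ m"
      unfolding q_def by (subst exp_of_nat_mult[symmetric]) (simp add: field_simps)
    have "q ^ m \<le> 1" by (rule power_le_one) (use q in auto)
    then have "r * q ^ m \<le> r" using r by (intro mult_left_le) auto
    then have x: "0 \<le> r * q ^ m" "r * q ^ m < 1" using q r by (simp, linarith)
    have "h n s = (r * q ^ m) ^ Suc n" for n
    proof -
      have "(q ^ m) ^ Suc n = (q ^ Suc n) ^ m" by (metis power_mult mult.commute)
      also have "\<dots> = (\<Prod>j<d. (q ^ Suc n) ^ s j)" unfolding m_def by (rule power_sum)
      finally show ?thesis unfolding h_def by (simp only: power_mult_distrib)
    qed
    then have "infsum (\<lambda>n. h n s) UNIV = r * q ^ m / (1 - r * q ^ m)"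
      using infsumI[OF has_sum_geometric_Suc[OF x]] by simp
    then show ?thesis using e m_def by simp
  qed
  show ?thesis
    unfolding trace_rG_def using swap column q_def g_def by simp
qed

text \<open>The rescaled trace splits into the regular excess part and the zero-mode
  term r/((1 - r) kappa^d), which carries the Bose-Einstein condensate.\<close>
definition scaled_trace :: "nat \<Rightarrow> real \<Rightarrow> real \<Rightarrow> real \<Rightarrow> real" where
  "scaled_trace d \<beta> \<kappa> r = excess_series d (\<beta> / \<kappa>) r / \<beta> ^ d + r / ((1 - r) * \<kappa> ^ d)"

lemma trace_term_split:
  assumes k: "\<kappa> > 0" and b: "\<beta> > 0"
  shows "r ^ Suc n * (1 / (1 - exp (-\<beta>/\<kappa>) ^ Suc n)) ^ d / \<kappa> ^ d =
         r ^ Suc n * excess_coeff d (\<beta> / \<kappa>) n / \<beta> ^ d + r ^ Suc n / \<kappa> ^ d"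
proof -
  define x where "x = real (Suc n) * (\<beta> / \<kappa>)"
  have "x > 0" unfolding x_def using k b by simp
  have E: "exp (-\<beta>/\<kappa>) ^ Suc n = exp (-x)"
    unfolding x_def by (subst exp_of_nat_mult[symmetric]) (simp add: field_simps)
  define A where "A = (1 / (1 - exp (-x))) ^ d"
  have "bose_excess d x = x ^ d * (A - 1)"
    unfolding bose_excess_def bose_factor_def A_def by (simp add: power_divide algebra_simps)
  also have "x ^ d = real (Suc n) ^ d * \<beta> ^ d / \<kappa> ^ d"
    unfolding x_def by (simp add: power_mult_distrib power_divide)
  finally have coeff: "excess_coeff d (\<beta> / \<kappa>) n = \<beta> ^ d / \<kappa> ^ d * (A - 1)"
    unfolding excess_coeff_def x_def[symmetric] by (simp del: of_nat_Suc)
  have "r ^ Suc n * excess_coeff d (\<beta> / \<kappa>) n / \<beta> ^ d + r ^ Suc n / \<kappa> ^ d = r ^ Suc n * A / \<kappa> ^ d"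
    unfolding coeff using k b by (simp add: field_simps)
  then show ?thesis unfolding E A_def[symmetric] by simp
qed

lemma trace_rG_eq_scaled_trace:
  assumes d: "d \<ge> 2" and k: "\<kappa> > 0" and b: "\<beta> > 0" and r: "0 < r" "r < 1"
  shows "trace_rG d \<kappa> \<beta> r / \<kappa> ^ d = scaled_trace d \<beta> \<kappa> r"
proof -
  let ?a = "\<lambda>n. r ^ Suc n * (1 / (1 - exp (-\<beta>/\<kappa>) ^ Suc n)) ^ d"
  have "(\<lambda>n. r ^ Suc n * excess_coeff d (\<beta> / \<kappa>) n / \<beta> ^ d) sums (excess_series d (\<beta> / \<kappa>) r / \<beta> ^ d)"
    unfolding excess_series_def
    by (intro sums_divide summable_sums summable_power_series_dominated summable_excess_coeff)
      (use assms in auto)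
  moreover have "(\<lambda>n. r ^ Suc n / \<kappa> ^ d) sums (r / (1 - r) / \<kappa> ^ d)"
    using has_sum_imp_sums[OF has_sum_geometric_Suc[of r]] r by (intro sums_divide) auto
  ultimately have "(\<lambda>n. ?a n / \<kappa> ^ d) sums scaled_trace d \<beta> \<kappa> r"
    unfolding trace_term_split[OF k b] scaled_trace_def divide_divide_eq_left by (rule sums_add)
  from sums_mult[OF this, of "\<kappa> ^ d"] have "?a sums (\<kappa> ^ d * scaled_trace d \<beta> \<kappa> r)"
    using k by simp
  then show ?thesis using trace_rG_series[OF k b r] k by (simp add: sums_iff)
qed

definition density_rhs :: "real \<Rightarrow> real \<Rightarrow> real \<Rightarrow> real \<Rightarrow> real" where
  "density_rhs \<beta> \<mu> lam r = (\<beta> * \<mu> - ln r) / (\<beta> * lam)"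

lemma density_rhs_strict_decreasing:
  assumes "\<beta> > 0" "lam > 0" "0 < r1" "r1 < r2"
  shows "density_rhs \<beta> \<mu> lam r2 < density_rhs \<beta> \<mu> lam r1"
  unfolding density_rhs_def using assms by (intro divide_strict_right_mono) auto

lemma density_rhs_at_right_zero:
  assumes "\<beta> > 0" "lam > 0"
  shows "filterlim (density_rhs \<beta> \<mu> lam) at_top (at_right 0)"
proof -
  have "c > 0 \<Longrightarrow> filterlim (\<lambda>r. (a - ln r) / c) at_top (at_right 0)" for a c :: real
    by real_asymp
  then show ?thesis unfolding density_rhs_def[abs_def] using assms by simp
qed

lemma scaled_trace_mono:
  assumes "d \<ge> 2" "\<kappa> > 0" "\<beta> > 0" "0 < r1" "r1 \<le> r2" "r2 < 1"
  shows "scaled_trace d \<beta> \<kappa> r1 \<le> scaled_trace d \<beta> \<kappa> r2"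
proof -
  have "excess_series d (\<beta> / \<kappa>) r1 / \<beta> ^ d \<le> excess_series d (\<beta> / \<kappa>) r2 / \<beta> ^ d"
    using assms by (intro divide_right_mono excess_series_mono) auto
  moreover have "r1 / (1 - r1) \<le> r2 / (1 - r2)"
    using assms by (simp add: divide_simps) (simp add: algebra_simps)
  then have "r1 / ((1 - r1) * \<kappa> ^ d) \<le> r2 / ((1 - r2) * \<kappa> ^ d)"
    using assms by (simp add: divide_right_mono flip: divide_divide_eq_left)
  ultimately show ?thesis unfolding scaled_trace_def by linarith
qed

lemma scaled_trace_continuous:
  assumes "d \<ge> 2" "\<kappa> > 0" "\<beta> > 0"
  shows "continuous_on {0..<1} (scaled_trace d \<beta> \<kappa>)"
proof -
  have "continuous_on {0..<1} (excess_series d (\<beta> / \<kappa>))"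
    by (rule continuous_on_subset[OF excess_series_continuous]) (use assms in auto)
  then show ?thesis
    unfolding scaled_trace_def[abs_def] using assms by (intro continuous_intros) auto
qed

text \<open>The zero-mode term makes the rescaled trace blow up as r \<rightarrow> 1.\<close>
lemma scaled_trace_at_left_one:
  assumes "d \<ge> 2" "\<kappa> > 0" "\<beta> > 0"
  shows "filterlim (scaled_trace d \<beta> \<kappa>) at_top (at_left 1)"
proof (rule filterlim_at_top_mono)
  have "c > 0 \<Longrightarrow> filterlim (\<lambda>r. r / ((1 - r) * c)) at_top (at_left 1)" for c :: real
    by real_asymp
  then show "filterlim (\<lambda>r. r / ((1 - r) * \<kappa> ^ d)) at_top (at_left 1)" using assms by simp
  show "eventually (\<lambda>r. r / ((1 - r) * \<kappa> ^ d) \<le> scaled_trace d \<beta> \<kappa> r) (at_left 1)"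
    using eventually_at_left_real[OF zero_less_one]
  proof (rule eventually_mono)
    fix r :: real
    assume "r \<in> {0<..<1}"
    then have "0 \<le> excess_series d (\<beta> / \<kappa>) r / \<beta> ^ d"
      using assms by (intro divide_nonneg_nonneg excess_series_nonneg) auto
    then show "r / ((1 - r) * \<kappa> ^ d) \<le> scaled_trace d \<beta> \<kappa> r"
      unfolding scaled_trace_def by linarith
  qed
qed

lemma crossing_unique:
  fixes f g :: "real \<Rightarrow> real"
  assumes f: "\<And>x y. x \<in> S \<Longrightarrow> y \<in> S \<Longrightarrow> x \<le> y \<Longrightarrow> f x \<le> f y"
    and g: "\<And>x y. x \<in> S \<Longrightarrow> y \<in> S \<Longrightarrow> x < y \<Longrightarrow> g y < g x"
    and "x \<in> S" "y \<in> S" "f x = g x" "f y = g y"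
  shows "x = y"
proof (rule ccontr)
  assume "x \<noteq> y"
  then consider "x < y" | "y < x" by linarith
  then show False
    by cases (use f[of x y] g[of x y] f[of y x] g[of y x] assms(3-) in auto)
qed

lemma crossing_compare:
  fixes f g :: "real \<Rightarrow> real"
  assumes f: "\<And>x y. x \<in> S \<Longrightarrow> y \<in> S \<Longrightarrow> x \<le> y \<Longrightarrow> f x \<le> f y"
    and g: "\<And>x y. x \<in> S \<Longrightarrow> y \<in> S \<Longrightarrow> x < y \<Longrightarrow> g y < g x"
    and S: "x \<in> S" "y \<in> S" and cross: "f x = g x"
  shows "f y < g y \<Longrightarrow> y < x" and "g y < f y \<Longrightarrow> x < y"
proof -
  show "y < x" if "f y < g y"
  proof (rule ccontr)
    assume "\<not> y < x"
    then consider "x < y" | "x = y" by linarith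
    then have "f x \<le> f y \<and> g y \<le> g x" by cases (use f[OF S] g[OF S] in auto)
    then show False using that cross by simp
  qed
  show "x < y" if "g y < f y"
  proof (rule ccontr)
    assume "\<not> x < y"
    then consider "y < x" | "x = y" by linarith
    then have "f y \<le> f x \<and> g x \<le> g y" by cases (use f[OF S(2,1)] g[OF S(2,1)] in auto)
    then show False using that cross by simp
  qed
qed

text \<open>Existence and uniqueness of r_kappa: the rescaled trace is continuous,
  nondecreasing, bounded near 0 and unbounded near 1, while the right-hand side
  is strictly decreasing and unbounded near 0.\<close>
lemma scaled_trace_crossing_ex1:
  assumes d: "d \<ge> 2" and k: "\<kappa> > 0" and b: "\<beta> > 0" and l: "lam > 0"
  shows "\<exists>!r. 0 < r \<and> r < 1 \<and> scaled_trace d \<beta> \<kappa> r = density_rhs \<beta> \<mu> lam r"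
proof -
  let ?F = "scaled_trace d \<beta> \<kappa>" and ?H = "density_rhs \<beta> \<mu> lam"
  define B where "B = excess_series d (\<beta> / \<kappa>) 1 / \<beta> ^ d + 1 / \<kappa> ^ d"
  have F_le_B: "?F r \<le> B" if "0 < r" "r \<le> 1/2" for r
  proof -
    have "excess_series d (\<beta> / \<kappa>) r / \<beta> ^ d \<le> excess_series d (\<beta> / \<kappa>) 1 / \<beta> ^ d"
      using that d k b by (intro divide_right_mono excess_series_mono) auto
    moreover have "r / ((1 - r) * \<kappa> ^ d) \<le> 1 / \<kappa> ^ d"
      using that k by (simp add: divide_simps)
    ultimately show ?thesis unfolding scaled_trace_def B_def by linarith
  qed
  have "eventually (\<lambda>r. B < ?H r \<and> r \<in> {0<..<1/2}) (at_right 0)"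
    using density_rhs_at_right_zero[OF b l, of \<mu>] eventually_at_right_real[of 0 "1/2::real"]
    by (auto simp: filterlim_at_top_dense intro: eventually_conj)
  then obtain a where a: "B < ?H a" "0 < a" "a < 1/2"
    using eventually_happens'[OF trivial_limit_at_right_real] by auto
  have "eventually (\<lambda>r. ?H (1/2) < ?F r) (at_left 1)"
    using scaled_trace_at_left_one[OF d k b] by (simp add: filterlim_at_top_dense)
  moreover have "eventually (\<lambda>r. r \<in> {1/2<..<1::real}) (at_left 1)"
    by (rule eventually_at_left_real) simp
  ultimately obtain c where c: "?H (1/2) < ?F c" "1/2 < c" "c < 1"
    using eventually_happens'[OF trivial_limit_at_left_real eventually_conj] by fastforce
  have "?H c < ?H (1/2)" using density_rhs_strict_decreasing[OF b l, of "1/2" c] c by simp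
  moreover have "continuous_on {a..c} ?F"
    by (rule continuous_on_subset[OF scaled_trace_continuous[OF d k b]]) (use a c in auto)
  then have "continuous_on {a..c} (\<lambda>r. ?F r - ?H r)"
    using a b l unfolding density_rhs_def[abs_def] by (intro continuous_intros) auto
  ultimately obtain x where x: "a \<le> x" "x \<le> c" "?F x - ?H x = 0"
    using IVT'[of "\<lambda>r. ?F r - ?H r" a 0 c] F_le_B[of a] a c by force
  show ?thesis
  proof (rule ex1I)
    show "0 < x \<and> x < 1 \<and> ?F x = ?H x" using x a c by auto
    show "y = x" if "0 < y \<and> y < 1 \<and> ?F y = ?H y" for y
      by (rule crossing_unique[where S="{0<..<1}" and f="?F" and g="?H"])
        (use that x a c scaled_trace_mono[OF d k b] density_rhs_strict_decreasing[OF b l] in auto)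
  qed
qed

lemma r_kappa_spec:
  fixes \<mu> :: real
  assumes d: "d \<ge> 2" and k: "\<kappa> > 0" and b: "\<beta> > 0" and l: "lam > 0"
  defines "r \<equiv> r_kappa d \<beta> \<mu> lam \<kappa>"
  shows "0 < r" "r < 1" "scaled_trace d \<beta> \<kappa> r = density_rhs \<beta> \<mu> lam r"
proof -
  have eq: "(0 < r \<and> r < 1 \<and> trace_rG d \<kappa> \<beta> r / \<kappa> ^ d = (\<beta> * \<mu> - ln r) / (\<beta> * lam))
        \<longleftrightarrow> (0 < r \<and> r < 1 \<and> scaled_trace d \<beta> \<kappa> r = density_rhs \<beta> \<mu> lam r)" for r
    using trace_rG_eq_scaled_trace[OF d k b, of r] unfolding density_rhs_def by auto
  have "0 < r \<and> r < 1 \<and> scaled_trace d \<beta> \<kappa> r = density_rhs \<beta> \<mu> lam r"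
    unfolding r_def r_kappa_def eq by (rule theI'[OF scaled_trace_crossing_ex1[OF d k b l]])
  then show "0 < r" "r < 1" "scaled_trace d \<beta> \<kappa> r = density_rhs \<beta> \<mu> lam r" by auto
qed

text \<open>The limiting integral over the orthant [0,\<infinity>)^d equals Li_d(r): expand
  r/(e^{|p|_1} - r) = \<Sum>_{k\<ge>1} r^k e^{-k|p|_1} and integrate term by term, each
  term being a product of one-dimensional exponential integrals \<int>_0^\<infinity> e^{-kx} = 1/k.\<close>

definition orthant_term :: "nat \<Rightarrow> real \<Rightarrow> nat \<Rightarrow> (nat \<Rightarrow> real) \<Rightarrow> real" where
  "orthant_term d r k p = r ^ Suc k * (\<Prod>j<d. indicator {0..} (p j) * exp (- real (Suc k) * p j))"

lemma orthant_term_nonneg: "0 < r \<Longrightarrow> 0 \<le> orthant_term d r k p"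
  unfolding orthant_term_def by (intro mult_nonneg_nonneg prod_nonneg) auto

lemma orthant_integrand_sums:
  assumes r: "0 < r" "r < 1"
  shows "(\<lambda>k. orthant_term d r k p) sums
           (if \<forall>j<d. 0 \<le> p j then r / (exp (\<Sum>j<d. p j) - r) else 0)"
proof (cases "\<forall>j<d. 0 \<le> p j")
  case True
  define s where "s = (\<Sum>j<d. p j)"
  have "0 \<le> s" unfolding s_def using True by (auto intro: sum_nonneg)
  define x where "x = r * exp (- s)"
  have "exp (- s) \<le> 1" using \<open>0 \<le> s\<close> by simp
  then have "x \<le> r" unfolding x_def using r by (intro mult_left_le) auto
  then have x: "0 \<le> x" "x < 1" using r by (simp add: x_def, linarith)
  have term_eq: "orthant_term d r k p = x ^ Suc k" for k
  proof -
    have "orthant_term d r k p = r ^ Suc k * (\<Prod>j<d. exp (- real (Suc k) * p j))"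
      unfolding orthant_term_def using True by (intro arg_cong[where f="\<lambda>z. r ^ Suc k * z"] prod.cong) auto
    also have "(\<Prod>j<d. exp (- real (Suc k) * p j)) = exp (\<Sum>j<d. - real (Suc k) * p j)"
      by (simp add: exp_sum)
    also have "(\<Sum>j<d. - real (Suc k) * p j) = real (Suc k) * (- s)"
      unfolding s_def by (simp only: mult_minus_left mult_minus_right sum_negf sum_distrib_left)
    also have "exp (real (Suc k) * (- s)) = exp (- s) ^ Suc k"
      by (rule exp_of_nat_mult)
    finally show ?thesis unfolding x_def by (simp add: power_mult_distrib)
  qed
  have "exp s * exp (- s) = 1" by (simp flip: exp_add)
  then have "1 - x = (exp s - r) * exp (- s)" unfolding x_def by (simp add: algebra_simps)
  then have "r / (exp s - r) = x / (1 - x)" by (simp add: x_def)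
  then show ?thesis using has_sum_imp_sums[OF has_sum_geometric_Suc[OF x]] True term_eq
    by (simp add: s_def)
next
  case False
  then obtain j where "j < d" "p j < 0" by auto
  then have "orthant_term d r k p = 0" for k
    unfolding orthant_term_def by (auto intro!: prod_zero bexI[of _ j])
  then show ?thesis by (subst if_not_P[OF False]) simp
qed

lemma nn_integral_exp_halfline:
  assumes c: "c > (0::real)"
  shows "(\<integral>\<^sup>+ x. ennreal (indicator {0..} x * exp (- c * x)) \<partial>lborel) = ennreal (1 / c)"
proof -
  have "((\<lambda>x::real. exp (-c*x)) has_integral exp (-c*0)/c) {0..}"
    by (rule has_integral_exp_minus_to_infinity) fact
  then have "((\<lambda>x::real. if x \<in> {0..} then exp (-c*x) else 0) has_integral 1/c) UNIV"
    by (subst has_integral_restrict_UNIV) simp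
  then have "((\<lambda>x::real. indicator {0..} x * exp (-c*x)) has_integral 1/c) UNIV"
    by (rule has_integral_eq[rotated]) (simp add: indicator_def)
  then show ?thesis
    by (rule nn_integral_has_integral_lborel[rotated 2]) auto
qed

lemma nn_integral_orthant_term:
  assumes r: "0 < r"
  shows "(\<integral>\<^sup>+ p. ennreal (orthant_term d r k p) \<partial>PiM {..<d} (\<lambda>_. lborel))
       = ennreal (r ^ Suc k / real (Suc k) ^ d)"
proof -
  interpret product_sigma_finite "\<lambda>_::nat. lborel :: real measure" by standard
  let ?e = "\<lambda>x. ennreal (indicator {0..} x * exp (- real (Suc k) * x))"
  have "ennreal (orthant_term d r k p) = ennreal (r ^ Suc k) * (\<Prod>j<d. ?e (p j))" for p
  proof -
    have nonneg: "0 \<le> indicator {0..} (p j) * exp (- real (Suc k) * p j)" for j by simp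
    have "ennreal (orthant_term d r k p)
        = ennreal (r ^ Suc k) * ennreal (\<Prod>j<d. indicator {0..} (p j) * exp (- real (Suc k) * p j))"
      unfolding orthant_term_def by (rule ennreal_mult) (use r nonneg in \<open>auto intro: prod_nonneg\<close>)
    also have "ennreal (\<Prod>j<d. indicator {0..} (p j) * exp (- real (Suc k) * p j)) = (\<Prod>j<d. ?e (p j))"
      by (rule prod_ennreal[symmetric]) (rule nonneg)
    finally show ?thesis .
  qed
  then have "(\<integral>\<^sup>+ p. ennreal (orthant_term d r k p) \<partial>PiM {..<d} (\<lambda>_. lborel))
      = ennreal (r ^ Suc k) * (\<integral>\<^sup>+ p. (\<Prod>j<d. ?e (p j)) \<partial>PiM {..<d} (\<lambda>_. lborel))"
    by (simp add: nn_integral_cmult)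
  also have "(\<integral>\<^sup>+ p. (\<Prod>j<d. ?e (p j)) \<partial>PiM {..<d} (\<lambda>_. lborel)) = (\<Prod>j<d. integral\<^sup>N lborel ?e)"
    by (rule product_nn_integral_prod) auto
  also have "\<dots> = ennreal ((1 / real (Suc k)) ^ d)"
    using nn_integral_exp_halfline[of "real (Suc k)"] by (simp add: ennreal_power)
  also have "ennreal (r ^ Suc k) * ennreal ((1 / real (Suc k)) ^ d) = ennreal (r ^ Suc k / real (Suc k) ^ d)"
    using r by (simp add: power_one_over flip: ennreal_mult)
  finally show ?thesis .
qed

lemma limit_integral_eq_polylog:
  assumes r: "0 < r" "r < 1" and d: "d \<ge> 2"
  shows "limit_integral d r = polylog d r"
proof -
  define M where "M = PiM {..<d} (\<lambda>_::nat. lborel :: real measure)"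
  define S where "S = {p \<in> space M. \<forall>j<d. 0 \<le> p j}"
  define f where "f = (\<lambda>p::nat \<Rightarrow> real. r / (exp (\<Sum>j<d. p j) - r))"
  have "S \<in> sets M" unfolding S_def M_def by measurable
  moreover have "f \<in> borel_measurable M" unfolding f_def M_def by measurable
  ultimately have meas: "(\<lambda>p. indicator S p * f p) \<in> borel_measurable M" by measurable
  have sums: "(\<lambda>k. orthant_term d r k p) sums (indicator S p * f p)" if "p \<in> space M" for p
    using orthant_integrand_sums[OF r, of d p] that
    by (cases "\<forall>j<d. 0 \<le> p j") (simp_all add: f_def S_def)
  have "(\<integral>\<^sup>+ p. ennreal (indicator S p * f p) \<partial>M) = (\<integral>\<^sup>+ p. (\<Sum>k. ennreal (orthant_term d r k p)) \<partial>M)"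
    using sums r by (intro nn_integral_cong suminf_ennreal_eq[symmetric] orthant_term_nonneg) auto
  also have "\<dots> = (\<Sum>k. \<integral>\<^sup>+ p. ennreal (orthant_term d r k p) \<partial>M)"
    by (rule nn_integral_suminf) (simp add: orthant_term_def M_def)
  also have "\<dots> = (\<Sum>k. ennreal (r ^ Suc k / real (Suc k) ^ d))"
    unfolding M_def using nn_integral_orthant_term[OF r(1)] by simp
  also have "\<dots> = ennreal (polylog d r)"
    unfolding polylog_def using r d
    by (intro suminf_ennreal_eq summable_sums summable_polylog) auto
  finally have nn: "(\<integral>\<^sup>+ p. ennreal (indicator S p * f p) \<partial>M) = ennreal (polylog d r)" .
  have "0 \<le> indicator S p * f p" for p
  proof (cases "p \<in> S")
    case True
    then have "1 \<le> exp (\<Sum>j<d. p j)" by (auto simp: S_def intro: sum_nonneg)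
    then have "0 \<le> f p" unfolding f_def using r by (intro divide_nonneg_pos) linarith+
    then show ?thesis by (simp add: True)
  qed simp
  then have "AE p in M. 0 \<le> indicator S p * f p" by (intro AE_I2)
  moreover have "0 \<le> polylog d r" using polylog_nonneg[OF d] r by simp
  ultimately have "has_bochner_integral M (\<lambda>p. indicator S p * f p) (polylog d r)"
    by (rule has_bochner_integral_nn_integral[OF meas _ _ nn])
  moreover have "limit_integral d r = integral\<^sup>L M (\<lambda>p. indicator S p * f p)"
    unfolding limit_integral_def set_lebesgue_integral_def M_def S_def f_def by simp
  ultimately show ?thesis by (simp add: has_bochner_integral_integral_eq)
qed

lemma tendsto_imp_not_at_top:
  fixes f :: "real \<Rightarrow> real"
  assumes "(f \<longlongrightarrow> c) at_top"
  shows "\<not> filterlim f at_top at_top"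
proof
  assume "filterlim f at_top at_top"
  then have "filterlim f at_infinity at_top" by (rule filterlim_at_top_imp_at_infinity)
  with assms show False using not_tendsto_and_filterlim_at_infinity[of at_top f c] by simp
qed

definition limit_profile :: "nat \<Rightarrow> real \<Rightarrow> real \<Rightarrow> real \<Rightarrow> real" where
  "limit_profile d \<beta> lam r = ln r / (\<beta> * lam) + polylog d r / \<beta> ^ d"

context
  fixes d :: nat and \<beta> lam \<mu> :: real
  assumes d: "d \<ge> 2" and b: "\<beta> > 0" and l: "lam > 0"
begin

abbreviation critical_density :: real where
  "critical_density \<equiv> zeta_nat d / \<beta> ^ d"

lemma fugacity_eventually:
  "eventually (\<lambda>\<kappa>. 0 < \<kappa> \<and> 0 < r_kappa d \<beta> \<mu> lam \<kappa> \<and> r_kappa d \<beta> \<mu> lam \<kappa> < 1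
     \<and> scaled_trace d \<beta> \<kappa> (r_kappa d \<beta> \<mu> lam \<kappa>) = density_rhs \<beta> \<mu> lam (r_kappa d \<beta> \<mu> lam \<kappa>)) at_top"
  using eventually_gt_at_top[of 0] by (rule eventually_mono) (use r_kappa_spec[OF d _ b l] in auto)

lemma density_rhs_eq: "density_rhs \<beta> \<mu> lam r = \<mu> / lam - ln r / (\<beta> * lam)"
  unfolding density_rhs_def using b l by (simp add: field_simps)

lemma limit_profile_less_iff:
  "limit_profile d \<beta> lam r < \<mu> / lam \<longleftrightarrow> polylog d r / \<beta> ^ d < density_rhs \<beta> \<mu> lam r"
  "\<mu> / lam < limit_profile d \<beta> lam r \<longleftrightarrow> density_rhs \<beta> \<mu> lam r < polylog d r / \<beta> ^ d"
  unfolding limit_profile_def density_rhs_eq by linarith+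

lemma spacing_tendsto_zero:
  "((\<lambda>\<kappa>::real. \<beta> / \<kappa>) \<longlongrightarrow> 0) at_top" "eventually (\<lambda>\<kappa>::real. \<beta> / \<kappa> > 0) at_top"
  using b by (real_asymp, simp add: eventually_at_top_linorder exI[of _ 1])

text \<open>For fixed r \<in> (0,1) the rescaled trace tends to Li_d(r)/beta^d: the excess
  series converges and the zero-mode term vanishes.\<close>
lemma scaled_trace_tendsto:
  assumes r: "0 < r" "r < 1"
  shows "((\<lambda>\<kappa>. scaled_trace d \<beta> \<kappa> r) \<longlongrightarrow> polylog d r / \<beta> ^ d) at_top"
proof -
  have "((\<lambda>\<kappa>. excess_series d (\<beta> / \<kappa>) r) \<longlongrightarrow> polylog d r) at_top"
    by (rule excess_series_tendsto_polylog[OF d spacing_tendsto_zero tendsto_const]) (use r in auto)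
  moreover have "((\<lambda>\<kappa>::real. r / ((1 - r) * \<kappa> ^ d)) \<longlongrightarrow> 0) at_top"
    using r d by real_asymp
  ultimately have "((\<lambda>\<kappa>. excess_series d (\<beta> / \<kappa>) r / \<beta> ^ d + r / ((1 - r) * \<kappa> ^ d))
      \<longlongrightarrow> polylog d r / \<beta> ^ d + 0) at_top"
    by (intro tendsto_intros) (use b in auto)
  then show ?thesis unfolding scaled_trace_def by simp
qed

lemma fugacity_eventually_above:
  assumes r: "0 < r" "r < 1" and less: "polylog d r / \<beta> ^ d < density_rhs \<beta> \<mu> lam r"
  shows "eventually (\<lambda>\<kappa>. r < r_kappa d \<beta> \<mu> lam \<kappa>) at_top"
  using fugacity_eventually order_tendstoD(2)[OF scaled_trace_tendsto[OF r] less]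
proof eventually_elim
  case (elim \<kappa>)
  show ?case
    by (rule crossing_compare(1)[where S="{0<..<1}" and f="scaled_trace d \<beta> \<kappa>" and g="density_rhs \<beta> \<mu> lam"])
      (use elim r scaled_trace_mono[OF d _ b] density_rhs_strict_decreasing[OF b l] in auto)
qed

lemma fugacity_eventually_below:
  assumes r: "0 < r" "r < 1" and greater: "density_rhs \<beta> \<mu> lam r < polylog d r / \<beta> ^ d"
  shows "eventually (\<lambda>\<kappa>. r_kappa d \<beta> \<mu> lam \<kappa> < r) at_top"
  using fugacity_eventually order_tendstoD(1)[OF scaled_trace_tendsto[OF r] greater]
proof eventually_elim
  case (elim \<kappa>)
  show ?case
    by (rule crossing_compare(2)[where S="{0<..<1}" and f="scaled_trace d \<beta> \<kappa>" and g="density_rhs \<beta> \<mu> lam"])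
      (use elim r scaled_trace_mono[OF d _ b] density_rhs_strict_decreasing[OF b l] in auto)
qed

lemma limit_profile_strict_mono:
  assumes "0 < r1" "r1 < r2" "r2 \<le> 1"
  shows "limit_profile d \<beta> lam r1 < limit_profile d \<beta> lam r2"
proof -
  have "ln r1 / (\<beta> * lam) < ln r2 / (\<beta> * lam)"
    using assms b l by (intro divide_strict_right_mono) auto
  moreover have "polylog d r1 / \<beta> ^ d \<le> polylog d r2 / \<beta> ^ d"
    using polylog_mono[OF d, of r1 r2] assms b by (simp add: divide_right_mono)
  ultimately show ?thesis unfolding limit_profile_def by simp
qed

lemma limit_profile_solvable:
  assumes sub: "\<mu> / lam < critical_density"
  shows "\<exists>rs. 0 < rs \<and> rs < 1 \<and> limit_profile d \<beta> lam rs = \<mu> / lam"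
proof -
  let ?\<Phi> = "limit_profile d \<beta> lam"
  have "c > 0 \<Longrightarrow> filterlim (\<lambda>r. ln r / c) at_bot (at_right 0)" for c :: real
    by real_asymp
  then have "eventually (\<lambda>r. ln r / (\<beta> * lam) < \<mu> / lam - critical_density) (at_right 0)"
    using b l by (simp add: filterlim_at_bot_dense)
  moreover have "eventually (\<lambda>r. r \<in> {0<..<1/2::real}) (at_right 0)"
    by (rule eventually_at_right_real) simp
  ultimately obtain a where a: "ln a / (\<beta> * lam) < \<mu> / lam - critical_density" "0 < a" "a < 1/2"
    using eventually_happens'[OF trivial_limit_at_right_real eventually_conj] by fastforce
  have "polylog d a / \<beta> ^ d \<le> critical_density"
    using polylog_le_zeta[OF d, of a] a b by (simp add: divide_right_mono)
  then have \<Phi>a: "?\<Phi> a \<le> \<mu> / lam" using a unfolding limit_profile_def by linarith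
  have "eventually (\<lambda>r. r \<in> {0<..<1::real}) (at_left 1)"
    by (rule eventually_at_left_real) simp
  then have "eventually (\<lambda>r. 0 \<le> r \<and> r \<le> 1) (at_left (1::real))"
    by (rule eventually_mono) auto
  then have "((\<lambda>r. ln r / (\<beta> * lam) + polylog d r / \<beta> ^ d)
      \<longlongrightarrow> ln 1 / (\<beta> * lam) + polylog d 1 / \<beta> ^ d) (at_left 1)"
    by (intro tendsto_intros polylog_tendsto[OF d tendsto_ident_at]) (use b l in auto)
  then have "(?\<Phi> \<longlongrightarrow> critical_density) (at_left 1)"
    unfolding limit_profile_def[abs_def] by (simp add: polylog_one)
  then have "eventually (\<lambda>r. \<mu> / lam < ?\<Phi> r) (at_left 1)"
    using sub by (rule order_tendstoD(1))
  moreover have "eventually (\<lambda>r. r \<in> {1/2<..<1::real}) (at_left 1)"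
    by (rule eventually_at_left_real) simp
  ultimately obtain c where c: "\<mu> / lam < ?\<Phi> c" "1/2 < c" "c < 1"
    using eventually_happens'[OF trivial_limit_at_left_real eventually_conj] by fastforce
  have "continuous_on {a..c} (polylog d)"
    by (rule continuous_on_subset[OF polylog_continuous[OF d]]) (use a c in auto)
  then have "continuous_on {a..c} ?\<Phi>"
    unfolding limit_profile_def[abs_def] using a b l by (intro continuous_intros) auto
  then obtain rs where "a \<le> rs" "rs \<le> c" "?\<Phi> rs = \<mu> / lam"
    using IVT'[of ?\<Phi> a "\<mu> / lam" c] \<Phi>a c a by force
  then show ?thesis using a c by (intro exI[of _ rs]) auto
qed

lemma fugacity_tendsto_solution:
  assumes rs: "0 < rs" "rs < 1" "limit_profile d \<beta> lam rs = \<mu> / lam"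
  shows "(r_kappa d \<beta> \<mu> lam \<longlongrightarrow> rs) at_top"
proof (rule order_tendstoI)
  fix y assume y: "y < rs"
  show "eventually (\<lambda>\<kappa>. y < r_kappa d \<beta> \<mu> lam \<kappa>) at_top"
  proof (cases "y \<le> 0")
    case True
    then show ?thesis using fugacity_eventually by (auto elim: eventually_mono)
  next
    case False
    then have "limit_profile d \<beta> lam y < \<mu> / lam"
      using limit_profile_strict_mono[of y rs] y rs by auto
    then show ?thesis
      using False y rs by (intro fugacity_eventually_above) (auto simp: limit_profile_less_iff)
  qed
next
  fix y assume y: "rs < y"
  show "eventually (\<lambda>\<kappa>. r_kappa d \<beta> \<mu> lam \<kappa> < y) at_top"
  proof (cases "y \<ge> 1")
    case True
    then show ?thesis using fugacity_eventually by (auto elim: eventually_mono)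
  next
    case False
    then have "\<mu> / lam < limit_profile d \<beta> lam y"
      using limit_profile_strict_mono[of rs y] y rs by auto
    then show ?thesis
      using False y rs by (intro fugacity_eventually_below) (auto simp: limit_profile_less_iff)
  qed
qed

text \<open>At or above the critical density, r_kappa tends to 1: for every y < 1 the
  limiting equation at y has left side Li_d(y)/beta^d \<le> zeta(d)/beta^d \<le> mu/lam
  < right-hand side.\<close>
lemma fugacity_tendsto_one:
  assumes "critical_density \<le> \<mu> / lam"
  shows "(r_kappa d \<beta> \<mu> lam \<longlongrightarrow> 1) at_top"
proof (rule order_tendstoI)
  fix y :: real assume y: "y < 1"
  show "eventually (\<lambda>\<kappa>. y < r_kappa d \<beta> \<mu> lam \<kappa>) at_top"
  proof (cases "y \<le> 0")
    case True
    then show ?thesis using fugacity_eventually by (auto elim: eventually_mono)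
  next
    case False
    have "polylog d y / \<beta> ^ d \<le> critical_density"
      using polylog_le_zeta[OF d, of y] False y b by (simp add: divide_right_mono)
    moreover have "ln y / (\<beta> * lam) < 0"
      using False y b l by (simp add: divide_neg_pos)
    ultimately show ?thesis
      using assms False y by (intro fugacity_eventually_above) (auto simp: density_rhs_eq)
  qed
next
  fix y :: real assume "1 < y"
  then show "eventually (\<lambda>\<kappa>. r_kappa d \<beta> \<mu> lam \<kappa> < y) at_top"
    using fugacity_eventually by (auto elim: eventually_mono)
qed

lemma condensate_tendsto:
  assumes "critical_density \<le> \<mu> / lam"
  shows "((\<lambda>\<kappa>. r_kappa d \<beta> \<mu> lam \<kappa> / ((1 - r_kappa d \<beta> \<mu> lam \<kappa>) * \<kappa> ^ d))
           \<longlongrightarrow> \<mu> / lam - critical_density) at_top"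
proof -
  let ?r = "r_kappa d \<beta> \<mu> lam"
  note R = fugacity_tendsto_one[OF assms]
  have "((\<lambda>\<kappa>. excess_series d (\<beta> / \<kappa>) (?r \<kappa>)) \<longlongrightarrow> polylog d 1) at_top"
    using fugacity_eventually
    by (intro excess_series_tendsto_polylog[OF d spacing_tendsto_zero R]) (auto elim: eventually_mono)
  moreover have "((\<lambda>\<kappa>. density_rhs \<beta> \<mu> lam (?r \<kappa>)) \<longlongrightarrow> \<mu> / lam - ln 1 / (\<beta> * lam)) at_top"
    unfolding density_rhs_eq by (intro tendsto_intros R) (use b l in auto)
  ultimately have "((\<lambda>\<kappa>. density_rhs \<beta> \<mu> lam (?r \<kappa>) - excess_series d (\<beta> / \<kappa>) (?r \<kappa>) / \<beta> ^ d)
      \<longlongrightarrow> \<mu> / lam - critical_density) at_top"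
    using tendsto_diff[OF _ tendsto_divide[OF _ tendsto_const]] b by (force simp: polylog_one)
  moreover have "eventually (\<lambda>\<kappa>. density_rhs \<beta> \<mu> lam (?r \<kappa>) - excess_series d (\<beta> / \<kappa>) (?r \<kappa>) / \<beta> ^ d
      = ?r \<kappa> / ((1 - ?r \<kappa>) * \<kappa> ^ d)) at_top"
    using fugacity_eventually by (rule eventually_mono) (auto simp: scaled_trace_def)
  ultimately show ?thesis by (rule Lim_transform_eventually)
qed

lemma kappa_power_at_top: "filterlim (\<lambda>\<kappa>::real. \<kappa> ^ d) at_top at_top"
  using d by (intro filterlim_pow_at_top filterlim_ident) auto

lemma gap_at_top_of_limit_below_one:
  assumes "rs < 1" "(r_kappa d \<beta> \<mu> lam \<longlongrightarrow> rs) at_top"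
  shows "filterlim (\<lambda>\<kappa>. \<kappa> ^ d * (1 - r_kappa d \<beta> \<mu> lam \<kappa>)) at_top at_top"
proof -
  have "((\<lambda>\<kappa>. 1 - r_kappa d \<beta> \<mu> lam \<kappa>) \<longlongrightarrow> 1 - rs) at_top" by (intro tendsto_intros assms(2))
  from filterlim_tendsto_pos_mult_at_top[OF this _ kappa_power_at_top]
  show ?thesis using assms(1) by (simp add: mult.commute)
qed

text \<open>Above criticality the condensate density is positive, so
  kappa^d (1 - r_kappa) = r_kappa / (condensate density) converges.\<close>
lemma gap_tendsto_supercritical:
  assumes sup: "critical_density < \<mu> / lam"
  shows "((\<lambda>\<kappa>. \<kappa> ^ d * (1 - r_kappa d \<beta> \<mu> lam \<kappa>)) \<longlongrightarrow> 1 / (\<mu> / lam - critical_density)) at_top"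
proof -
  let ?r = "r_kappa d \<beta> \<mu> lam"
  have "((\<lambda>\<kappa>. ?r \<kappa> / (?r \<kappa> / ((1 - ?r \<kappa>) * \<kappa> ^ d))) \<longlongrightarrow> 1 / (\<mu> / lam - critical_density)) at_top"
    using sup by (intro tendsto_divide fugacity_tendsto_one condensate_tendsto) auto
  moreover have "eventually (\<lambda>\<kappa>. ?r \<kappa> / (?r \<kappa> / ((1 - ?r \<kappa>) * \<kappa> ^ d)) = \<kappa> ^ d * (1 - ?r \<kappa>)) at_top"
    using fugacity_eventually by (rule eventually_mono) auto
  ultimately show ?thesis by (rule Lim_transform_eventually)
qed

text \<open>At criticality the condensate density vanishes, so kappa^d (1 - r_kappa) \<rightarrow> \<infinity>.\<close>
lemma gap_at_top_critical:
  assumes at_crit: "\<mu> / lam = critical_density"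
  shows "filterlim (\<lambda>\<kappa>. \<kappa> ^ d * (1 - r_kappa d \<beta> \<mu> lam \<kappa>)) at_top at_top"
proof -
  let ?r = "r_kappa d \<beta> \<mu> lam"
  have "((\<lambda>\<kappa>. ?r \<kappa> / ((1 - ?r \<kappa>) * \<kappa> ^ d)) \<longlongrightarrow> 0) at_top"
    using condensate_tendsto at_crit by simp
  then have "filterlim (\<lambda>\<kappa>. inverse (?r \<kappa> / ((1 - ?r \<kappa>) * \<kappa> ^ d))) at_top at_top"
    using fugacity_eventually by (intro filterlim_inverse_at_top) (auto elim: eventually_mono)
  moreover have "(?r \<longlongrightarrow> 1) at_top" using at_crit by (intro fugacity_tendsto_one) simp
  ultimately have "filterlim (\<lambda>\<kappa>. ?r \<kappa> * inverse (?r \<kappa> / ((1 - ?r \<kappa>) * \<kappa> ^ d))) at_top at_top"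
    using filterlim_tendsto_pos_mult_at_top by fastforce
  moreover have "eventually (\<lambda>\<kappa>. ?r \<kappa> * inverse (?r \<kappa> / ((1 - ?r \<kappa>) * \<kappa> ^ d)) = \<kappa> ^ d * (1 - ?r \<kappa>)) at_top"
    using fugacity_eventually by (rule eventually_mono) (auto simp: inverse_divide)
  ultimately show ?thesis by (rule filterlim_cong[OF refl refl, THEN iffD1, rotated])
qed

lemma limit_profile_inj:
  assumes "0 < r1" "r1 \<le> 1" "0 < r2" "r2 \<le> 1"
    and "limit_profile d \<beta> lam r1 = limit_profile d \<beta> lam r2"
  shows "r1 = r2"
proof (rule ccontr)
  assume "r1 \<noteq> r2"
  then consider "r1 < r2" | "r2 < r1" by linarith
  then show False
    by cases (use limit_profile_strict_mono[of r1 r2] limit_profile_strict_mono[of r2 r1] assms in auto)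
qed

lemma gap_at_top_unless_supercritical:
  assumes "\<mu> / lam \<le> critical_density"
  shows "filterlim (\<lambda>\<kappa>. \<kappa> ^ d * (1 - r_kappa d \<beta> \<mu> lam \<kappa>)) at_top at_top"
proof (cases "\<mu> / lam < critical_density")
  case True
  then obtain rs where "0 < rs" "rs < 1" "limit_profile d \<beta> lam rs = \<mu> / lam"
    using limit_profile_solvable by blast
  then show ?thesis by (intro gap_at_top_of_limit_below_one fugacity_tendsto_solution)
qed (use assms gap_at_top_critical in auto)

lemma limit_in_unit_interval_iff:
  "(\<exists>rs. 0 < rs \<and> rs < 1 \<and> (r_kappa d \<beta> \<mu> lam \<longlongrightarrow> rs) at_top) \<longleftrightarrow> \<mu> / lam < critical_density"
proof
  assume "\<exists>rs. 0 < rs \<and> rs < 1 \<and> (r_kappa d \<beta> \<mu> lam \<longlongrightarrow> rs) at_top"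
  then obtain rs where rs: "rs < 1" "(r_kappa d \<beta> \<mu> lam \<longlongrightarrow> rs) at_top" by blast
  show "\<mu> / lam < critical_density"
  proof (rule ccontr)
    assume "\<not> \<mu> / lam < critical_density"
    then have "(r_kappa d \<beta> \<mu> lam \<longlongrightarrow> 1) at_top" by (intro fugacity_tendsto_one) simp
    then have "rs = 1" using tendsto_unique[OF _ rs(2)] by simp
    then show False using rs(1) by simp
  qed
next
  assume "\<mu> / lam < critical_density"
  then obtain rs where "0 < rs" "rs < 1" "limit_profile d \<beta> lam rs = \<mu> / lam"
    using limit_profile_solvable by blast
  then show "\<exists>rs. 0 < rs \<and> rs < 1 \<and> (r_kappa d \<beta> \<mu> lam \<longlongrightarrow> rs) at_top"
    using fugacity_tendsto_solution by blast
qed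

lemma limit_solves_limiting_equation:
  "\<forall>rs. 0 < rs \<and> rs < 1 \<and> (r_kappa d \<beta> \<mu> lam \<longlongrightarrow> rs) at_top \<longrightarrow>
     \<mu> / lam = ln rs / (\<beta> * lam) + limit_integral d rs / \<beta> ^ d
     \<and> (\<forall>r. 0 < r \<and> r < 1 \<and> \<mu> / lam = ln r / (\<beta> * lam) + limit_integral d r / \<beta> ^ d \<longrightarrow> r = rs)"
proof (intro allI impI)
  fix rs assume "0 < rs \<and> rs < 1 \<and> (r_kappa d \<beta> \<mu> lam \<longlongrightarrow> rs) at_top"
  then have rs: "0 < rs" "rs < 1" "(r_kappa d \<beta> \<mu> lam \<longlongrightarrow> rs) at_top" by simp_all
  have "\<mu> / lam < critical_density"
    by (rule limit_in_unit_interval_iff[THEN iffD1]) (use rs in blast)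
  then obtain r0 where r0: "0 < r0" "r0 < 1" "limit_profile d \<beta> lam r0 = \<mu> / lam"
    using limit_profile_solvable by blast
  have "rs = r0"
    using tendsto_unique[OF _ rs(3) fugacity_tendsto_solution[OF r0]] by simp
  then have eq: "limit_profile d \<beta> lam rs = \<mu> / lam" using r0 by simp
  have integral: "limit_integral d r = polylog d r" if "0 < r" "r < 1" for r
    using limit_integral_eq_polylog[OF that d] .
  show "\<mu> / lam = ln rs / (\<beta> * lam) + limit_integral d rs / \<beta> ^ d
     \<and> (\<forall>r. 0 < r \<and> r < 1 \<and> \<mu> / lam = ln r / (\<beta> * lam) + limit_integral d r / \<beta> ^ d \<longrightarrow> r = rs)"
  proof (intro conjI allI impI)
    show "\<mu> / lam = ln rs / (\<beta> * lam) + limit_integral d rs / \<beta> ^ d"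
      using eq integral[OF rs(1,2)] by (simp add: limit_profile_def)
    fix r assume r: "0 < r \<and> r < 1 \<and> \<mu> / lam = ln r / (\<beta> * lam) + limit_integral d r / \<beta> ^ d"
    then have "limit_profile d \<beta> lam r = limit_profile d \<beta> lam rs"
      using eq integral[of r] by (simp add: limit_profile_def)
    then show "r = rs" using limit_profile_inj[of r rs] r rs by simp
  qed
qed

lemma gap_tendsto_iff:
  "((\<lambda>\<kappa>. \<kappa> ^ d * (1 - r_kappa d \<beta> \<mu> lam \<kappa>)) \<longlongrightarrow> 1 / (\<mu> / lam - critical_density)) at_top \<longleftrightarrow> critical_density < \<mu> / lam"
proof
  assume "((\<lambda>\<kappa>. \<kappa> ^ d * (1 - r_kappa d \<beta> \<mu> lam \<kappa>)) \<longlongrightarrow> 1 / (\<mu> / lam - critical_density)) at_top"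
  then have "\<not> filterlim (\<lambda>\<kappa>. \<kappa> ^ d * (1 - r_kappa d \<beta> \<mu> lam \<kappa>)) at_top at_top"
    by (rule tendsto_imp_not_at_top)
  then show "critical_density < \<mu> / lam"
    using gap_at_top_unless_supercritical by fastforce
qed (rule gap_tendsto_supercritical)

lemma critical_iff:
  "((r_kappa d \<beta> \<mu> lam \<longlongrightarrow> 1) at_top \<and> filterlim (\<lambda>\<kappa>. \<kappa> ^ d * (1 - r_kappa d \<beta> \<mu> lam \<kappa>)) at_top at_top) \<longleftrightarrow> \<mu> / lam = critical_density"
proof
  assume lim: "(r_kappa d \<beta> \<mu> lam \<longlongrightarrow> 1) at_top \<and> filterlim (\<lambda>\<kappa>. \<kappa> ^ d * (1 - r_kappa d \<beta> \<mu> lam \<kappa>)) at_top at_top"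
  have "\<not> \<mu> / lam < critical_density"
  proof
    assume "\<mu> / lam < critical_density"
    then obtain rs where "rs < 1" "(r_kappa d \<beta> \<mu> lam \<longlongrightarrow> rs) at_top"
      using limit_in_unit_interval_iff by auto
    then have "rs = 1" using tendsto_unique[OF _ _ conjunct1[OF lim]] by simp
    then show False using \<open>rs < 1\<close> by simp
  qed
  moreover have "\<not> critical_density < \<mu> / lam"
  proof
    assume "critical_density < \<mu> / lam"
    from tendsto_imp_not_at_top[OF gap_tendsto_supercritical[OF this]] lim show False by simp
  qed
  ultimately show "\<mu> / lam = critical_density" by linarith
next
  assume "\<mu> / lam = critical_density"
  then show "(r_kappa d \<beta> \<mu> lam \<longlongrightarrow> 1) at_top \<and> filterlim (\<lambda>\<kappa>. \<kappa> ^ d * (1 - r_kappa d \<beta> \<mu> lam \<kappa>)) at_top at_top"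
    using fugacity_tendsto_one gap_at_top_critical by simp
qed

end

theorem proposition2p1:
  fixes d :: nat and \<beta> lam \<mu> :: real
  assumes "d > 2" and "\<beta> > 0" and "lam > 0"
  defines "rk \<equiv> r_kappa d \<beta> \<mu> lam"
  shows
    "(((\<exists>rs. 0 < rs \<and> rs < 1 \<and> (rk \<longlongrightarrow> rs) at_top)
        \<longleftrightarrow> \<beta> ^ d * \<mu> < zeta_nat d * lam)
     \<and> (\<forall>rs. 0 < rs \<and> rs < 1 \<and> (rk \<longlongrightarrow> rs) at_top \<longrightarrow>
          \<mu> / lam = ln rs / (\<beta> * lam) + limit_integral d rs / \<beta> ^ d
          \<and> (\<forall>r. 0 < r \<and> r < 1 \<and>
                  \<mu> / lam = ln r / (\<beta> * lam) + limit_integral d r / \<beta> ^ d \<longrightarrow> r = rs)))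
     \<and> ((((\<lambda>\<kappa>. \<kappa> ^ d * (1 - rk \<kappa>)) \<longlongrightarrow> \<beta> ^ d * lam / (\<beta> ^ d * \<mu> - zeta_nat d * lam)) at_top
        \<longleftrightarrow> \<beta> ^ d * \<mu> > zeta_nat d * lam)
     \<and> (\<beta> ^ d * \<mu> > zeta_nat d * lam \<longrightarrow> (rk \<longlongrightarrow> 1) at_top))
     \<and> (((rk \<longlongrightarrow> 1) at_top \<and> filterlim (\<lambda>\<kappa>. \<kappa> ^ d * (1 - rk \<kappa>)) at_top at_top)
        \<longleftrightarrow> \<beta> ^ d * \<mu> = zeta_nat d * lam)"
proof -
  have d: "d \<ge> 2" using assms(1) by simp
  note b = assms(2) and l = assms(3)
  have bd: "\<beta> ^ d > 0" and bd0: "\<beta> ^ d \<noteq> 0" using b by simp_all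
  have regimes: "\<beta> ^ d * \<mu> < zeta_nat d * lam \<longleftrightarrow> \<mu> / lam < zeta_nat d / \<beta> ^ d"
      "zeta_nat d * lam < \<beta> ^ d * \<mu> \<longleftrightarrow> zeta_nat d / \<beta> ^ d < \<mu> / lam"
    using bd l by (simp_all add: field_simps)
  have critical: "\<beta> ^ d * \<mu> = zeta_nat d * lam \<longleftrightarrow> \<mu> / lam = zeta_nat d / \<beta> ^ d"
    using bd0 l by (auto simp: field_simps)
  have "\<mu> / lam - zeta_nat d / \<beta> ^ d = (\<beta> ^ d * \<mu> - zeta_nat d * lam) / (\<beta> ^ d * lam)"
    using bd0 l by (simp add: diff_frac_eq mult.commute)
  then have limit_value:
    "\<beta> ^ d * lam / (\<beta> ^ d * \<mu> - zeta_nat d * lam) = 1 / (\<mu> / lam - zeta_nat d / \<beta> ^ d)"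
    by simp
  have "zeta_nat d / \<beta> ^ d < \<mu> / lam \<longrightarrow> (r_kappa d \<beta> \<mu> lam \<longlongrightarrow> 1) at_top"
    using fugacity_tendsto_one[OF d b l] by simp
  then show ?thesis
    unfolding rk_def regimes critical limit_value
    by (intro conjI limit_in_unit_interval_iff[OF d b l] limit_solves_limiting_equation[OF d b l]
        gap_tendsto_iff[OF d b l] critical_iff[OF d b l])
qed

end
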